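(* Let $f(X)=\sum_{a=(h_1,\dots,h_N)\in\mathcal{A}} w_a\sum_{\biguplus_{i=1}^N X_i=X}\prod_{i=1}^N f_{h_i}(X_i)$ be a multi-Bernoulli mixture. For Bernoulli densities $[g_j]=(g_1,\dots,g_N)$ and, for each $a\in\mathcal{A}$, a probability distribution $q_a$ on $\Pi_N$ (i.e. $q_a(\pi)\ge 0$, $\sum_{\pi\in\Pi_N}q_a(\pi)=1$), define the zero-temperature objective $$\tilde J_0\big([g_j],[q_a(\pi)]\big)=-\sum_{a\in\mathcal{A},\pi\in\Pi_N} w_a q_a(\pi)\sum_{i=1}^N\int f_{h_i}(X)\log g_{\pi(i)}(X)\,\delta X .$$ Then minimising $\tilde J_0$ jointly over $[g_j]$ (Bernoulli densities, $g_j\ge0$, $\int g_j(X)\delta X=1$) and $[q_a(\pi)]$ is equivalent to solving $$\operatorname*{minimise}_{q(h,j)\in\mathcal{P}}\ -\sum_{j=1}^N\int\Big(\sum_{h\in\mathcal{H}}q(h,j)f_h(X)\Big)\log\Big(\sum_{h\in\mathcal{H}}q(h,j)f_h(X)\Big)\,\delta X,$$ where $$\mathcal{P}=\Big\{q(h,j)=\sum_{i=1}^N\Big(\sum_{a=(h_1,\dots,h_N)\in\mathcal{A}:\,h_i=h} w_a\sum_{\pi\in\Pi_N:\,\pi(i)=j}q_a(\pi)\Big)\ \Big|\ q_a(\pi)\ge0,\ \sum_{\pi\in\Pi_N}q_a(\pi)=1\ \forall a\Big\}.$$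
   Context: Single-target states lie in $\mathcal{X}\subseteq\mathbb{R}^d$. The set integral is $\int v(X)\,\delta X = v(\emptyset)+\sum_{n=1}^\infty\frac{1}{n!}\int\cdots\int v(\{x_1,\dots,x_n\})\,\mathrm{d}x_1\cdots\mathrm{d}x_n$. A Bernoulli density with existence probability $r$ and state density $p(x)$ is $b(\emptyset)=1-r$, $b(\{x\})=r\,p(x)$, $b(X)=0$ for $|X|>1$. $\mathcal{H}$ is an index set of single-target hypotheses, each $f_h$ ($h\in\mathcal{H}$) a Bernoulli density; $\mathcal{A}\subseteq\mathcal{H}^N$ is a finite set of global hypotheses $a=(h_1,\dots,h_N)$ with weights $w_a\ge0$, $\sum_a w_a=1$. $\sum_{\biguplus_{i=1}^N X_i=X}$ sums over ordered tuples of disjoint subsets with union $X$. $\Pi_N$ is the set of permutations of $\{1,\dots,N\}$. Convention $0\log0=0$. *)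

theory Defs
  imports "HOL-Analysis.Analysis" "HOL-Combinatorics.Permutations"
begin

text \<open>Single-target state space: a Borel set Xs in a Euclidean space 'a, with
Lebesgue measure.  Multi-target densities are functions on finite sets of states.\<close>

definition state_measure :: "'a::euclidean_space set \<Rightarrow> 'a measure" where
  "state_measure Xs = restrict_space lborel Xs"

definition set_nn_integral :: "'a::euclidean_space set \<Rightarrow> ('a set \<Rightarrow> ennreal) \<Rightarrow> ennreal" where
  "set_nn_integral Xs v =
     v {} + (\<Sum>n. (\<integral>\<^sup>+ x. v (x ` {..<Suc n}) \<partial>(PiM {..<Suc n} (\<lambda>_. state_measure Xs)))
                     / ennreal (fact (Suc n)))"

definition set_integral_ereal :: "'a::euclidean_space set \<Rightarrow> ('a set \<Rightarrow> ereal) \<Rightarrow> ereal" where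
  "set_integral_ereal Xs v =
     enn2ereal (set_nn_integral Xs (\<lambda>X. e2ennreal (v X)))
     - enn2ereal (set_nn_integral Xs (\<lambda>X. e2ennreal (- v X)))"

definition is_bernoulli :: "'a::euclidean_space set \<Rightarrow> ('a set \<Rightarrow> real) \<Rightarrow> bool" where
  "is_bernoulli Xs b \<longleftrightarrow>
     (\<exists>r p. 0 \<le> r \<and> r \<le> 1 \<and> p \<in> borel_measurable lborel \<and> (\<forall>x\<in>Xs. 0 \<le> p x)
        \<and> (\<integral>\<^sup>+ x. ennreal (p x) \<partial>state_measure Xs) = 1
        \<and> b {} = 1 - r \<and> (\<forall>x\<in>Xs. b {x} = r * p x)
        \<and> (\<forall>X. X \<subseteq> Xs \<and> finite X \<and> 2 \<le> card X \<longrightarrow> b X = 0))"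

text \<open>Pointwise u log v with the conventions 0 log 0 = 0 (indeed 0 log v = 0) and
u log 0 = -infinity for u > 0.\<close>
definition xlogy :: "real \<Rightarrow> real \<Rightarrow> ereal" where
  "xlogy u v = (if u \<le> 0 then 0 else if v \<le> 0 then - \<infinity> else ereal (u * ln v))"

definition cross_ent :: "'a::euclidean_space set \<Rightarrow> ('a set \<Rightarrow> real) \<Rightarrow> ('a set \<Rightarrow> real) \<Rightarrow> ereal" where
  "cross_ent Xs f g = - set_integral_ereal Xs (\<lambda>X. xlogy (f X) (g X))"

definition perms :: "nat \<Rightarrow> (nat \<Rightarrow> nat) set" where
  "perms N = {\<pi>. \<pi> permutes {..<N}}"

text \<open>Zero-temperature objective tilde J_0.  Global hypotheses a are lists of length N
(index i ranges over 0..N-1), f h is the Bernoulli density of single-target hypothesis h.\<close>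
definition J0 :: "'a::euclidean_space set \<Rightarrow> nat \<Rightarrow> 'h list set \<Rightarrow> ('h list \<Rightarrow> real)
     \<Rightarrow> ('h \<Rightarrow> 'a set \<Rightarrow> real) \<Rightarrow> (nat \<Rightarrow> 'a set \<Rightarrow> real) \<Rightarrow> ('h list \<Rightarrow> (nat \<Rightarrow> nat) \<Rightarrow> real) \<Rightarrow> ereal" where
  "J0 Xs N A w f g q =
     (\<Sum>a\<in>A. \<Sum>\<pi>\<in>perms N. ereal (w a * q a \<pi>) * (\<Sum>i<N. cross_ent Xs (f (a ! i)) (g (\<pi> i))))"

definition valid_q :: "nat \<Rightarrow> 'h list set \<Rightarrow> ('h list \<Rightarrow> (nat \<Rightarrow> nat) \<Rightarrow> real) \<Rightarrow> bool" where
  "valid_q N A q \<longleftrightarrow> (\<forall>a\<in>A. (\<forall>\<pi>\<in>perms N. 0 \<le> q a \<pi>) \<and> (\<Sum>\<pi>\<in>perms N. q a \<pi>) = 1)"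

definition induced_q :: "nat \<Rightarrow> 'h list set \<Rightarrow> ('h list \<Rightarrow> real) \<Rightarrow> ('h list \<Rightarrow> (nat \<Rightarrow> nat) \<Rightarrow> real)
     \<Rightarrow> 'h \<Rightarrow> nat \<Rightarrow> real" where
  "induced_q N A w q h j =
     (\<Sum>i<N. \<Sum>a\<in>{a\<in>A. a ! i = h}. w a * (\<Sum>\<pi>\<in>{\<pi>\<in>perms N. \<pi> i = j}. q a \<pi>))"

definition P_set :: "nat \<Rightarrow> 'h list set \<Rightarrow> ('h list \<Rightarrow> real) \<Rightarrow> ('h \<Rightarrow> nat \<Rightarrow> real) set" where
  "P_set N A w = {induced_q N A w q | q. valid_q N A q}"

text \<open>Objective over P: sum_j of -int m_j log m_j with m_j = sum_h q(h,j) f_h.  The sum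
over h in H is taken over the hypotheses occurring in A (q(h,j) = 0 for all others).\<close>
definition mix_obj :: "'a::euclidean_space set \<Rightarrow> nat \<Rightarrow> 'h list set \<Rightarrow> ('h \<Rightarrow> 'a set \<Rightarrow> real)
     \<Rightarrow> ('h \<Rightarrow> nat \<Rightarrow> real) \<Rightarrow> ereal" where
  "mix_obj Xs N A f Q =
     (\<Sum>j<N. let m = (\<lambda>X. \<Sum>h\<in>(\<Union>a\<in>A. set a). Q h j * f h X) in cross_ent Xs m m)"

end

theory Submission
  imports Defs "HOL-Library.Liminf_Limsup"
begin

text \<open>
For a fixed assignment distribution \<open>q\<close>, the objective regroups as
\<open>\<Sum>j. CE(m\<^sub>j, g\<^sub>j)\<close>, where \<open>m\<^sub>j = \<Sum>h. q(h,j) f\<^sub>h\<close> and the weights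
\<open>q(h,j)\<close> are those of the induced matrix; this uses that the cross entropy is linear in
its first argument.  Since every column of \<open>q(h,j)\<close> sums to one, \<open>m\<^sub>j\<close> is again a
Bernoulli density, and Gibbs' inequality \<open>CE(m, m) \<le> CE(m, g)\<close> (pointwise
\<open>m log g \<le> m log m - m + g\<close>, integrated against equal total masses) shows that \<open>g\<^sub>j = m\<^sub>j\<close> is
optimal.  Hence the infimum over \<open>[g\<^sub>j]\<close> is attained and equals the mixture objective at
the induced \<open>q(h,j)\<close>, and the joint infimum is the infimum over \<open>\<P>\<close>.

All densities involved vanish on sets with two or more elements, and the diagonals
\<open>x\<^sub>i = x\<^sub>j\<close> are null sets for Lebesgue measure, so every set integral collapses to
\<open>v(\<emptyset>) + \<integral> v({x}) dx\<close>.  Cross entropies are differences of the integrals of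
the positive and negative parts of \<open>m log g\<close>; the finite-entropy hypothesis keeps every
positive part integrable, so no \<open>\<infinity> - \<infinity>\<close> arises.
\<close>

lemma space_state_measure [simp]: "space (state_measure Xs) = Xs"
  by (simp add: state_measure_def space_restrict_space)

lemma sigma_finite_state_measure: "Xs \<in> sets lborel \<Longrightarrow> sigma_finite_measure (state_measure Xs)"
  unfolding state_measure_def
  by (rule sigma_finite_measure_restrict_space) (auto intro: sigma_finite_lborel)

lemma emeasure_state_measure_singleton:
  assumes "Xs \<in> sets lborel" "c \<in> Xs"
  shows "emeasure (state_measure Xs) {c} = 0"
  unfolding state_measure_def using assms
  by (subst emeasure_restrict_space) auto

lemma singleton_in_sets_state_measure:
  "Xs \<in> sets lborel \<Longrightarrow> c \<in> Xs \<Longrightarrow> {c} \<in> sets (state_measure Xs)"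
  unfolding state_measure_def by (subst sets_restrict_space_iff) auto

lemma diagonal_in_sets_PiM:
  assumes "i \<in> I" "j \<in> I"
  shows "{x \<in> space (PiM I (\<lambda>_. state_measure Xs)). x i = x j} \<in> sets (PiM I (\<lambda>_. state_measure Xs))"
proof -
  have id: "(\<lambda>y. y) \<in> borel_measurable (state_measure Xs)"
    unfolding state_measure_def by (rule measurable_restrict_space1) simp
  have comp: "\<And>k. k \<in> I \<Longrightarrow> (\<lambda>x. x k) \<in> borel_measurable (PiM I (\<lambda>_. state_measure Xs))"
    by (rule measurable_compose[OF measurable_component_singleton[where M="\<lambda>_. state_measure Xs"] id])
  show ?thesis
    by (rule measurable_equality_set) (use assms comp in auto)
qed

lemma emeasure_PiM_diagonal:
  assumes Xs: "Xs \<in> sets lborel" and n: "1 \<le> n"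
  shows "emeasure (PiM {..<Suc n} (\<lambda>_. state_measure Xs))
           {x \<in> space (PiM {..<Suc n} (\<lambda>_. state_measure Xs)). x 0 = x 1} = 0"
proof -
  let ?M = "state_measure Xs"
  interpret P: product_sigma_finite "\<lambda>_. ?M"
    unfolding product_sigma_finite_def using sigma_finite_state_measure[OF Xs] by blast
  let ?I = "{1..<Suc n}"
  have I: "{..<Suc n} = insert 0 ?I" by auto
  let ?D = "{x \<in> space (PiM (insert 0 ?I) (\<lambda>_. ?M)). x 0 = x 1}"
  have D: "?D \<in> sets (PiM (insert 0 ?I) (\<lambda>_. ?M))"
    by (rule diagonal_in_sets_PiM) (use n in auto)
  have "emeasure (PiM (insert 0 ?I) (\<lambda>_. ?M)) ?D = (\<integral>\<^sup>+ x. indicator ?D x \<partial>PiM (insert 0 ?I) (\<lambda>_. ?M))"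
    using D by simp
  also have "\<dots> = (\<integral>\<^sup>+ x. (\<integral>\<^sup>+ y. indicator ?D (x(0:=y)) \<partial>?M) \<partial>PiM ?I (\<lambda>_. ?M))"
    by (rule P.product_nn_integral_insert) (use D in auto)
  also have "\<dots> = (\<integral>\<^sup>+ x. 0 \<partial>PiM ?I (\<lambda>_. ?M))"
  proof (rule nn_integral_cong)
    fix x assume "x \<in> space (PiM ?I (\<lambda>_. ?M))"
    then have x1: "x 1 \<in> Xs" using n by (auto simp: space_PiM)
    have "(\<integral>\<^sup>+ y. indicator ?D (x(0:=y)) \<partial>?M) \<le> (\<integral>\<^sup>+ y. indicator {x 1} y \<partial>?M)"
      by (rule nn_integral_mono) (auto simp: indicator_def)
    also have "\<dots> = 0"
      using emeasure_state_measure_singleton[OF Xs x1] singleton_in_sets_state_measure[OF Xs x1] by simp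
    finally show "(\<integral>\<^sup>+ y. indicator ?D (x(0:=y)) \<partial>?M) = 0" by simp
  qed
  finally show ?thesis by (simp add: I)
qed

definition set_nn_integral_le1 :: "'a::euclidean_space set \<Rightarrow> ('a set \<Rightarrow> ennreal) \<Rightarrow> ennreal" where
  "set_nn_integral_le1 Xs v = v {} + (\<integral>\<^sup>+ x. v {x} \<partial>state_measure Xs)"

lemma set_nn_integral_eq_le1:
  fixes v :: "'a::euclidean_space set \<Rightarrow> ennreal"
  assumes Xs: "Xs \<in> sets lborel"
    and vanish: "\<And>X. X \<subseteq> Xs \<Longrightarrow> finite X \<Longrightarrow> 2 \<le> card X \<Longrightarrow> v X = 0"
    and meas: "(\<lambda>x. v {x}) \<in> borel_measurable (state_measure Xs)"
  shows "set_nn_integral Xs v = set_nn_integral_le1 Xs v"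
proof -
  let ?M = "state_measure Xs"
  interpret P: product_sigma_finite "\<lambda>_. ?M"
    unfolding product_sigma_finite_def using sigma_finite_state_measure[OF Xs] by blast
  let ?F = "\<lambda>n. (\<integral>\<^sup>+ x. v (x ` {..<Suc n}) \<partial>PiM {..<Suc n} (\<lambda>_. ?M)) / ennreal (fact (Suc n))"
  have F0: "?F 0 = (\<integral>\<^sup>+ x. v {x} \<partial>?M)"
  proof -
    have "{..<Suc 0} = {0::nat}" by auto
    then have "?F 0 = (\<integral>\<^sup>+ x. v {x 0} \<partial>PiM {0::nat} (\<lambda>_. ?M))"
      by (simp add: divide_ennreal_def)
    also have "\<dots> = (\<integral>\<^sup>+ x. v {x} \<partial>?M)"
      by (rule P.product_nn_integral_singleton[OF meas])
    finally show ?thesis .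
  qed
  have Fn: "?F n = 0" if "n \<noteq> 0" for n
  proof -
    let ?P = "PiM {..<Suc n} (\<lambda>_. ?M)"
    let ?D = "{x \<in> space ?P. x 0 = x 1}"
    have D: "?D \<in> sets ?P" by (rule diagonal_in_sets_PiM) (use that in auto)
    \<comment> \<open>off the diagonal the tuple has two distinct entries, so \<open>v\<close> vanishes there\<close>
    have "(\<integral>\<^sup>+ x. v (x ` {..<Suc n}) \<partial>?P) \<le> (\<integral>\<^sup>+ x. \<infinity> * indicator ?D x \<partial>?P)"
    proof (rule nn_integral_mono)
      fix x assume x: "x \<in> space ?P"
      show "v (x ` {..<Suc n}) \<le> \<infinity> * indicator ?D x"
      proof (cases "x 0 = x 1")
        case False
        have "{x 0, x 1} \<subseteq> x ` {..<Suc n}" using that by auto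
        then have "card {x 0, x 1} \<le> card (x ` {..<Suc n})" by (intro card_mono) auto
        then have "2 \<le> card (x ` {..<Suc n})" using False by simp
        moreover have "x ` {..<Suc n} \<subseteq> Xs" using x by (auto simp: space_PiM)
        ultimately show ?thesis using vanish by simp
      qed (use x in \<open>simp add: indicator_def\<close>)
    qed
    also have "\<dots> = \<infinity> * emeasure ?P ?D" using D by (rule nn_integral_cmult_indicator)
    also have "\<dots> = 0" using emeasure_PiM_diagonal[OF Xs] that by simp
    finally show ?thesis by simp
  qed
  have "suminf ?F = ?F 0" by (rule suminf_finite[of "{0}", simplified]) (use Fn in auto)
  then show ?thesis unfolding set_nn_integral_def set_nn_integral_le1_def using F0 by simp
qed


lemma e2ennreal_0 [simp]: "e2ennreal 0 = 0"
  by (simp add: e2ennreal_neg)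

lemma xlogy_nonpos [simp]: "u \<le> 0 \<Longrightarrow> xlogy u v = 0"
  by (simp add: xlogy_def)

lemma xlogy_pos: "0 \<le> u \<Longrightarrow> 0 < v \<Longrightarrow> xlogy u v = ereal (u * ln v)"
  by (auto simp: xlogy_def)

lemma xlogy_zero_right: "0 < u \<Longrightarrow> xlogy u 0 = - \<infinity>"
  by (simp add: xlogy_def)

lemma mult_ln_le: "0 < (f::real) \<Longrightarrow> 0 < g \<Longrightarrow> f * ln g \<le> f * ln f - f + g"
proof -
  assume f: "0 < f" and g: "0 < g"
  have "ln (g / f) \<le> g / f - 1" using f g by (intro ln_le_minus_one) auto
  then have "f * ln (g / f) \<le> f * (g / f - 1)" using f by (intro mult_left_mono) auto
  then show ?thesis using f g by (simp add: ln_div algebra_simps)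
qed

lemma e2ennreal_xlogy_le:
  assumes "0 \<le> f" "0 \<le> g"
  shows "e2ennreal (xlogy f g) \<le> e2ennreal (xlogy f f) + ennreal g"
proof (cases "f = 0 \<or> g = 0")
  case True
  then consider "f = 0" | "0 < f" "g = 0" using assms by fastforce
  then show ?thesis by cases (auto simp: xlogy_zero_right e2ennreal_neg)
next
  case False
  then have f: "0 < f" and g: "0 < g" using assms by auto
  have "f * ln g \<le> max (f * ln f) 0 + g" using mult_ln_le[OF f g] f by linarith
  then have "ennreal (f * ln g) \<le> ennreal (max (f * ln f) 0 + g)" by (rule ennreal_leI)
  also have "\<dots> = ennreal (max (f * ln f) 0) + ennreal g" using g by (intro ennreal_plus) auto
  also have "ennreal (max (f * ln f) 0) = ennreal (f * ln f)"
    by (cases "f * ln f \<ge> 0") (auto simp: ennreal_neg max_def)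
  finally show ?thesis using f g by (simp add: xlogy_pos)
qed

lemma e2ennreal_xlogy_gibbs:
  assumes "0 \<le> m" "0 \<le> g"
  shows "e2ennreal (xlogy m g) + e2ennreal (- xlogy m m) + ennreal m
         \<le> e2ennreal (- xlogy m g) + e2ennreal (xlogy m m) + ennreal g"
proof (cases "m = 0 \<or> g = 0")
  case True
  then consider "m = 0" | "0 < m" "g = 0" using assms by fastforce
  then show ?thesis by cases (auto simp: xlogy_zero_right)
next
  case False
  then have m: "0 < m" and g: "0 < g" using assms by auto
  have "\<And>a b::real. a \<le> b - m + g \<Longrightarrow> max a 0 + max (- b) 0 + m \<le> max (- a) 0 + max b 0 + g"
    by (simp add: max_def)
  from this[OF mult_ln_le[OF m g]]
  have "ennreal (max (m * ln g) 0 + max (- (m * ln m)) 0 + m)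
      \<le> ennreal (max (- (m * ln g)) 0 + max (m * ln m) 0 + g)"
    by (rule ennreal_leI)
  moreover have "\<And>x. ennreal (max x 0) = ennreal x" by (auto simp: ennreal_neg max_def)
  ultimately show ?thesis using m g
    by (simp add: xlogy_pos ennreal_plus del: ennreal_plus[symmetric])
qed

lemma sum_ennreal_mult_e2ennreal_neg_xlogy_zero:
  assumes fin: "finite K" and Q: "\<forall>k\<in>K. 0 \<le> Q k" and F: "\<forall>k\<in>K. 0 \<le> F k"
  shows "(\<Sum>k\<in>K. ennreal (Q k) * e2ennreal (- xlogy (F k) 0))
       = (if 0 < (\<Sum>k\<in>K. Q k * F k) then top else 0)"
proof -
  have summand: "ennreal (Q k) * e2ennreal (- xlogy (F k) 0) = (if 0 < Q k * F k then top else 0)"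
    if "k \<in> K" for k
    using Q F that by (cases "F k = 0"; cases "Q k = 0")
      (auto simp: xlogy_zero_right ennreal_mult_top zero_less_mult_iff)
  have nonneg: "\<forall>k\<in>K. 0 \<le> Q k * F k" using Q F by simp
  then have "(\<Sum>k\<in>K. Q k * F k) = 0 \<longleftrightarrow> (\<forall>k\<in>K. Q k * F k = 0)"
    using fin by (simp add: sum_nonneg_eq_0_iff)
  then have pos_iff: "0 < (\<Sum>k\<in>K. Q k * F k) \<longleftrightarrow> (\<exists>k\<in>K. 0 < Q k * F k)"
    using nonneg sum_nonneg[of K "\<lambda>k. Q k * F k"] by (auto simp: less_le)
  show ?thesis
    using fin pos_iff by (simp add: summand cong: sum.cong)
qed

lemma e2ennreal_xlogy_sum:
  assumes fin: "finite K" and Q: "\<forall>k\<in>K. 0 \<le> Q k" and F: "\<forall>k\<in>K. 0 \<le> F k" and g: "0 \<le> g"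
  shows "e2ennreal (xlogy (\<Sum>k\<in>K. Q k * F k) g) + (\<Sum>k\<in>K. ennreal (Q k) * e2ennreal (- xlogy (F k) g))
       = e2ennreal (- xlogy (\<Sum>k\<in>K. Q k * F k) g) + (\<Sum>k\<in>K. ennreal (Q k) * e2ennreal (xlogy (F k) g))"
    (is "?eq")
    and "e2ennreal (xlogy (\<Sum>k\<in>K. Q k * F k) g) \<le> (\<Sum>k\<in>K. ennreal (Q k) * e2ennreal (xlogy (F k) g))"
    (is "?le")
proof -
  let ?m = "\<Sum>k\<in>K. Q k * F k"
  have m0: "0 \<le> ?m" using Q F by (intro sum_nonneg) auto
  have "?eq \<and> ?le"
  proof (cases "g = 0")
    case True
    have "e2ennreal (xlogy x 0) = 0" for x
      by (cases "x \<le> 0") (auto simp: xlogy_zero_right e2ennreal_neg)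
    moreover have "e2ennreal (- xlogy ?m 0) = (if 0 < ?m then top else 0)"
      using m0 by (auto simp: xlogy_zero_right)
    ultimately show ?thesis
      using True sum_ennreal_mult_e2ennreal_neg_xlogy_zero[OF fin Q F] by simp
  next
    case False
    then have g: "0 < g" using g by simp
    define L where "L = ln g"
    have x: "\<And>x. 0 \<le> x \<Longrightarrow> xlogy x g = ereal (x * L)" using g by (simp add: xlogy_pos L_def)
    have mx: "xlogy ?m g = ereal (?m * L)" using x[OF m0] .
    have Fx: "\<And>k. k \<in> K \<Longrightarrow> xlogy (F k) g = ereal (F k * L)" using x F by auto
    \<comment> \<open>for \<open>g > 0\<close> all terms \<open>F\<^sub>k log g\<close> have the sign of \<open>log g\<close>, so only one part is nonzero\<close>
    show ?thesis
    proof (cases "0 \<le> L")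
      case True
      have "(\<Sum>k\<in>K. ennreal (Q k) * ennreal (F k * L)) = ennreal (?m * L)"
        using Q F True by (simp add: ennreal_mult[symmetric] sum_distrib_right mult.assoc)
      moreover have "(\<Sum>k\<in>K. ennreal (Q k) * ennreal (- (F k * L))) = 0"
        using Q F True by (auto intro!: sum.neutral simp: ennreal_neg)
      moreover have "ennreal (- (?m * L)) = 0" using m0 True by (intro ennreal_neg) simp
      ultimately show ?thesis by (simp add: mx Fx cong: sum.cong)
    next
      case False
      have "(\<Sum>k\<in>K. ennreal (Q k) * ennreal (- (F k * L))) = (\<Sum>k\<in>K. ennreal (Q k * (- (F k * L))))"
        using Q F False by (intro sum.cong refl, subst ennreal_mult) (auto simp: mult_nonneg_nonpos)
      also have "\<dots> = ennreal (\<Sum>k\<in>K. Q k * (- (F k * L)))"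
        using Q F False by (intro sum_ennreal) (simp add: mult_nonneg_nonpos)
      also have "(\<Sum>k\<in>K. Q k * (- (F k * L))) = - (?m * L)"
        by (simp add: sum_distrib_right sum_negf mult.assoc)
      finally have "(\<Sum>k\<in>K. ennreal (Q k) * ennreal (- (F k * L))) = ennreal (- (?m * L))" .
      moreover have "(\<Sum>k\<in>K. ennreal (Q k) * ennreal (F k * L)) = 0"
        using Q F False by (auto intro!: sum.neutral simp: ennreal_neg mult_nonneg_nonpos)
      moreover have "ennreal (?m * L) = 0"
        using m0 False by (intro ennreal_neg) (simp add: mult_nonneg_nonpos)
      ultimately show ?thesis by (simp add: mx Fx cong: sum.cong)
    qed
  qed
  then show ?eq ?le by auto
qed


lemma uminus_enn2ereal_diff_eq:
  fixes a b X Y :: ennreal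
  assumes "a + X = Y + b" "a < top" "b < top"
  shows "-(enn2ereal a - enn2ereal Y) = -(enn2ereal b - enn2ereal X)"
proof -
  obtain a' where a: "a = ennreal a'" "0 \<le> a'" using assms(2) by (cases a) auto
  obtain b' where b: "b = ennreal b'" "0 \<le> b'" using assms(3) by (cases b) auto
  show ?thesis
  proof (cases "X = top")
    case True
    then have "Y + b = top" using assms(1) by simp
    then have "Y = top" using b by (simp add: ennreal_add_eq_top)
    then show ?thesis using True a b by simp
  next
    case False
    then obtain x where x: "X = ennreal x" "0 \<le> x" by (cases X) auto
    have "Y \<noteq> top" using assms(1) a b x by (metis ennreal_add_eq_top ennreal_neq_top)
    then obtain y where y: "Y = ennreal y" "0 \<le> y" by (cases Y) auto
    have "a' + x = y + b'" using assms(1) a b x y by (simp add: ennreal_plus[symmetric] del: ennreal_plus)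
    then show ?thesis using a b x y by simp
  qed
qed

lemma uminus_enn2ereal_diff_le:
  fixes a b c X Y :: ennreal
  assumes "a + X + c \<le> Y + b + c" "a < top" "b < top" "c < top"
  shows "-(enn2ereal b - enn2ereal X) \<le> -(enn2ereal a - enn2ereal Y)"
proof -
  obtain a' where a: "a = ennreal a'" "0 \<le> a'" using assms(2) by (cases a) auto
  obtain b' where b: "b = ennreal b'" "0 \<le> b'" using assms(3) by (cases b) auto
  obtain c' where c: "c = ennreal c'" "0 \<le> c'" using assms(4) by (cases c) auto
  show ?thesis
  proof (cases "Y = top")
    case True
    then show ?thesis using a b by simp
  next
    case False
    then obtain y where y: "Y = ennreal y" "0 \<le> y" by (cases Y) auto
    have "X \<noteq> top" using assms(1) a b c y by (auto simp: ennreal_plus[symmetric] top_unique simp del: ennreal_plus)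
    then obtain x where x: "X = ennreal x" "0 \<le> x" by (cases X) auto
    have "a' + x + c' \<le> y + b' + c'" using assms(1) a b c x y
      by (simp add: ennreal_plus[symmetric] del: ennreal_plus)
    then show ?thesis using a b x y by simp
  qed
qed

lemma ereal_mult_uminus_enn2ereal_diff_add:
  fixes p n SP SN :: ennreal and q :: real
  assumes "0 \<le> q" "p < top" "SP < top"
  shows "ereal q * -(enn2ereal p - enn2ereal n) + -(enn2ereal SP - enn2ereal SN)
       = -(enn2ereal (ennreal q * p + SP) - enn2ereal (ennreal q * n + SN))"
proof -
  obtain p' where p: "p = ennreal p'" "0 \<le> p'" using assms(2) by (cases p) auto
  obtain s' where s: "SP = ennreal s'" "0 \<le> s'" using assms(3) by (cases SP) auto
  have qp: "ennreal q * p + SP = ennreal (q * p' + s')"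
    using p s assms(1) by (simp add: ennreal_mult ennreal_plus)
  show ?thesis
  proof (cases n rule: ennreal_cases)
    case (real n')
    show ?thesis
    proof (cases SN rule: ennreal_cases)
      case (real t')
      have qn: "ennreal q * n + SN = ennreal (q * n' + t')"
        using real \<open>n = ennreal n'\<close> assms(1) \<open>0 \<le> n'\<close> by (simp add: ennreal_mult ennreal_plus)
      have "q * p' + s' \<ge> 0" "q * n' + t' \<ge> 0" using assms(1) p s real \<open>0 \<le> n'\<close> by auto
      then show ?thesis unfolding qp qn using p s real \<open>n = ennreal n'\<close> \<open>0 \<le> n'\<close> assms(1)
        by (simp del: ennreal_plus add: algebra_simps)
    next
      case top
      have "q * p' + s' \<ge> 0" using assms(1) p s by auto
      then show ?thesis unfolding qp using top p s real assms(1) by (simp del: ennreal_plus)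
    qed
  next
    case top
    show ?thesis
    proof (cases "q = 0")
      case True
      then show ?thesis using p s by (simp add: zero_ereal_def[symmetric])
    next
      case False
      then have q: "0 < q" using assms(1) by simp
      have "ennreal q * n = top" using top q by (simp add: ennreal_mult_top)
      moreover have "ereal q * -(enn2ereal p - enn2ereal n) = \<infinity>" using top q p by simp
      moreover have "-(enn2ereal SP - enn2ereal SN) \<noteq> -\<infinity>" using s by (cases SN rule: ennreal_cases) auto
      moreover have "q * p' + s' \<ge> 0" using assms(1) p s by auto
      ultimately show ?thesis using qp by (simp del: ennreal_plus)
    qed
  qed
qed

lemma sum_ereal_mult_uminus_enn2ereal_diff:
  fixes P N :: "'k \<Rightarrow> ennreal" and Q :: "'k \<Rightarrow> real"
  assumes "finite K" "\<forall>k\<in>K. 0 \<le> Q k" "\<forall>k\<in>K. P k < top"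
  shows "(\<Sum>k\<in>K. ereal (Q k) * -(enn2ereal (P k) - enn2ereal (N k)))
       = -(enn2ereal (\<Sum>k\<in>K. ennreal (Q k) * P k) - enn2ereal (\<Sum>k\<in>K. ennreal (Q k) * N k))"
  using assms
proof (induction K rule: finite_induct)
  case empty then show ?case by simp
next
  case (insert k K)
  have lt: "(\<Sum>k\<in>K. ennreal (Q k) * P k) < top"
    using insert by (simp add: ennreal_mult_less_top less_top)
  show ?case using insert ereal_mult_uminus_enn2ereal_diff_add[OF _ _ lt, of "Q k" "P k" "N k"] by simp
qed


definition le1_density :: "'a::euclidean_space set \<Rightarrow> ('a set \<Rightarrow> real) \<Rightarrow> bool" where
  "le1_density Xs f \<longleftrightarrow> (\<forall>X. X \<subseteq> Xs \<and> finite X \<and> 2 \<le> card X \<longrightarrow> f X = 0)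
     \<and> (\<lambda>x. f {x}) \<in> borel_measurable (state_measure Xs) \<and> 0 \<le> f {} \<and> (\<forall>x\<in>Xs. 0 \<le> f {x})"

definition pos_xlogy :: "('b \<Rightarrow> real) \<Rightarrow> ('b \<Rightarrow> real) \<Rightarrow> 'b \<Rightarrow> ennreal" where
  "pos_xlogy f g X = e2ennreal (xlogy (f X) (g X))"

definition neg_xlogy :: "('b \<Rightarrow> real) \<Rightarrow> ('b \<Rightarrow> real) \<Rightarrow> 'b \<Rightarrow> ennreal" where
  "neg_xlogy f g X = e2ennreal (- xlogy (f X) (g X))"

lemma le1_densityD:
  assumes "le1_density Xs f"
  shows "0 \<le> f {}" "x \<in> Xs \<Longrightarrow> 0 \<le> f {x}"
    and "(\<lambda>x. f {x}) \<in> borel_measurable (state_measure Xs)"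
    and "(\<lambda>x. ennreal (f {x})) \<in> borel_measurable (state_measure Xs)"
  using assms by (auto simp: le1_density_def)

lemma measurable_xlogy [measurable]:
  assumes [measurable]: "F \<in> borel_measurable M" "G \<in> borel_measurable M"
  shows "(\<lambda>x. xlogy (F x) (G x)) \<in> borel_measurable M"
  unfolding xlogy_def by measurable

lemma measurable_pos_xlogy:
  "le1_density Xs f \<Longrightarrow> le1_density Xs g \<Longrightarrow>
    (\<lambda>x. pos_xlogy f g {x}) \<in> borel_measurable (state_measure Xs)"
  unfolding pos_xlogy_def using le1_densityD(3)[of Xs f] le1_densityD(3)[of Xs g] by measurable

lemma measurable_neg_xlogy:
  "le1_density Xs f \<Longrightarrow> le1_density Xs g \<Longrightarrow>
    (\<lambda>x. neg_xlogy f g {x}) \<in> borel_measurable (state_measure Xs)"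
  unfolding neg_xlogy_def using le1_densityD(3)[of Xs f] le1_densityD(3)[of Xs g] by measurable

lemma le1_density_sum_mult:
  assumes "finite K" "\<forall>k\<in>K. 0 \<le> Q k" "\<forall>k\<in>K. le1_density Xs (F k)"
  shows "le1_density Xs (\<lambda>X. \<Sum>k\<in>K. Q k * F k X)"
proof -
  have "(\<lambda>x. \<Sum>k\<in>K. Q k * F k {x}) \<in> borel_measurable (state_measure Xs)"
    using assms by (intro borel_measurable_sum borel_measurable_times) (auto simp: le1_density_def)
  then show ?thesis using assms by (auto simp: le1_density_def intro!: sum_nonneg)
qed

lemma set_nn_integral_le1_mono:
  assumes "F {} \<le> G {}" "\<And>x. x \<in> Xs \<Longrightarrow> F {x} \<le> G {x}"
  shows "set_nn_integral_le1 Xs F \<le> set_nn_integral_le1 Xs G"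
  unfolding set_nn_integral_le1_def using assms by (intro add_mono nn_integral_mono) auto

lemma set_nn_integral_le1_cong:
  assumes "F {} = G {}" "\<And>x. x \<in> Xs \<Longrightarrow> F {x} = G {x}"
  shows "set_nn_integral_le1 Xs F = set_nn_integral_le1 Xs G"
  using assms by (intro antisym set_nn_integral_le1_mono) auto

lemma set_nn_integral_le1_add:
  assumes "(\<lambda>x. F {x}) \<in> borel_measurable (state_measure Xs)"
    and "(\<lambda>x. G {x}) \<in> borel_measurable (state_measure Xs)"
  shows "set_nn_integral_le1 Xs (\<lambda>X. F X + G X) = set_nn_integral_le1 Xs F + set_nn_integral_le1 Xs G"
  unfolding set_nn_integral_le1_def using assms by (simp add: nn_integral_add algebra_simps)

lemma set_nn_integral_le1_sum_cmult:
  assumes "\<And>k. k \<in> K \<Longrightarrow> (\<lambda>x. F k {x}) \<in> borel_measurable (state_measure Xs)"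
  shows "set_nn_integral_le1 Xs (\<lambda>X. \<Sum>k\<in>K. c k * F k X) = (\<Sum>k\<in>K. c k * set_nn_integral_le1 Xs (F k))"
  unfolding set_nn_integral_le1_def using assms
  by (simp add: nn_integral_sum nn_integral_cmult sum.distrib distrib_left sum_distrib_left)

lemma set_nn_integral_le1_ennreal_sum_mult:
  assumes "finite K" "\<forall>k\<in>K. 0 \<le> Q k" "\<forall>k\<in>K. le1_density Xs (F k)"
  shows "set_nn_integral_le1 Xs (\<lambda>X. ennreal (\<Sum>k\<in>K. Q k * F k X))
       = (\<Sum>k\<in>K. ennreal (Q k) * set_nn_integral_le1 Xs (\<lambda>X. ennreal (F k X)))"
proof -
  have "ennreal (\<Sum>k\<in>K. Q k * F k X) = (\<Sum>k\<in>K. ennreal (Q k) * ennreal (F k X))"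
    if "X = {} \<or> (\<exists>x\<in>Xs. X = {x})" for X
    using assms that by (subst sum_ennreal[symmetric]) (auto simp: le1_density_def ennreal_mult)
  then have "set_nn_integral_le1 Xs (\<lambda>X. ennreal (\<Sum>k\<in>K. Q k * F k X))
      = set_nn_integral_le1 Xs (\<lambda>X. \<Sum>k\<in>K. ennreal (Q k) * ennreal (F k X))"
    by (intro set_nn_integral_le1_cong) auto
  also have "\<dots> = (\<Sum>k\<in>K. ennreal (Q k) * set_nn_integral_le1 Xs (\<lambda>X. ennreal (F k X)))"
    using assms by (intro set_nn_integral_le1_sum_cmult) (auto dest: le1_densityD(4))
  finally show ?thesis .
qed

lemma cross_ent_eq_pos_neg:
  assumes Xs: "Xs \<in> sets lborel" and f: "le1_density Xs f" and g: "le1_density Xs g"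
  shows "cross_ent Xs f g = - (enn2ereal (set_nn_integral_le1 Xs (pos_xlogy f g))
                               - enn2ereal (set_nn_integral_le1 Xs (neg_xlogy f g)))"
proof -
  have vanish: "f X = 0" if "X \<subseteq> Xs" "finite X" "2 \<le> card X" for X
    using f that by (auto simp: le1_density_def)
  have "set_nn_integral Xs (pos_xlogy f g) = set_nn_integral_le1 Xs (pos_xlogy f g)"
    by (rule set_nn_integral_eq_le1[OF Xs])
      (use vanish measurable_pos_xlogy[OF f g] in \<open>auto simp: pos_xlogy_def\<close>)
  moreover have "set_nn_integral Xs (neg_xlogy f g) = set_nn_integral_le1 Xs (neg_xlogy f g)"
    by (rule set_nn_integral_eq_le1[OF Xs])
      (use vanish measurable_neg_xlogy[OF f g] in \<open>auto simp: neg_xlogy_def\<close>)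
  ultimately show ?thesis
    unfolding cross_ent_def set_integral_ereal_def pos_xlogy_def neg_xlogy_def by simp
qed

lemma set_nn_integral_le1_pos_xlogy_finite:
  assumes f: "le1_density Xs f" and g: "le1_density Xs g"
    and "set_nn_integral_le1 Xs (pos_xlogy f f) < top"
    and "set_nn_integral_le1 Xs (\<lambda>X. ennreal (g X)) < top"
  shows "set_nn_integral_le1 Xs (pos_xlogy f g) < top"
proof -
  have "set_nn_integral_le1 Xs (pos_xlogy f g)
      \<le> set_nn_integral_le1 Xs (\<lambda>X. pos_xlogy f f X + ennreal (g X))"
    by (rule set_nn_integral_le1_mono)
      (use f g in \<open>auto simp: pos_xlogy_def le1_density_def intro!: e2ennreal_xlogy_le\<close>)
  also have "\<dots> = set_nn_integral_le1 Xs (pos_xlogy f f) + set_nn_integral_le1 Xs (\<lambda>X. ennreal (g X))"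
    by (rule set_nn_integral_le1_add) (use measurable_pos_xlogy[OF f f] le1_densityD(4)[OF g] in auto)
  also have "\<dots> < top" using assms by simp
  finally show ?thesis .
qed


lemma set_nn_integral_le1_pos_xlogy_sum_le:
  assumes fin: "finite K" and Q: "\<forall>k\<in>K. 0 \<le> Q k"
    and F: "\<forall>k\<in>K. le1_density Xs (F k)" and g: "le1_density Xs g"
  shows "set_nn_integral_le1 Xs (pos_xlogy (\<lambda>X. \<Sum>k\<in>K. Q k * F k X) g)
       \<le> (\<Sum>k\<in>K. ennreal (Q k) * set_nn_integral_le1 Xs (pos_xlogy (F k) g))"
proof -
  have "set_nn_integral_le1 Xs (pos_xlogy (\<lambda>X. \<Sum>k\<in>K. Q k * F k X) g)
      \<le> set_nn_integral_le1 Xs (\<lambda>X. \<Sum>k\<in>K. ennreal (Q k) * pos_xlogy (F k) g X)"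
    unfolding pos_xlogy_def
    by (rule set_nn_integral_le1_mono; rule e2ennreal_xlogy_sum(2)[OF fin Q])
      (use F g in \<open>auto dest: le1_densityD\<close>)
  also have "\<dots> = (\<Sum>k\<in>K. ennreal (Q k) * set_nn_integral_le1 Xs (pos_xlogy (F k) g))"
    using F by (intro set_nn_integral_le1_sum_cmult measurable_pos_xlogy[OF _ g]) auto
  finally show ?thesis .
qed

lemma cross_ent_sum_left:
  assumes Xs: "Xs \<in> sets lborel" and fin: "finite K" and Q: "\<forall>k\<in>K. 0 \<le> Q k"
    and F: "\<forall>k\<in>K. le1_density Xs (F k)" and g: "le1_density Xs g"
    and finite_pos: "\<forall>k\<in>K. set_nn_integral_le1 Xs (pos_xlogy (F k) g) < top"
  shows "cross_ent Xs (\<lambda>X. \<Sum>k\<in>K. Q k * F k X) g = (\<Sum>k\<in>K. ereal (Q k) * cross_ent Xs (F k) g)"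
proof -
  define m where "m = (\<lambda>X. \<Sum>k\<in>K. Q k * F k X)"
  let ?I = "set_nn_integral_le1 Xs"
  have m: "le1_density Xs m" unfolding m_def by (rule le1_density_sum_mult[OF fin Q F])
  have "?I (\<lambda>X. pos_xlogy m g X + (\<Sum>k\<in>K. ennreal (Q k) * neg_xlogy (F k) g X))
      = ?I (\<lambda>X. neg_xlogy m g X + (\<Sum>k\<in>K. ennreal (Q k) * pos_xlogy (F k) g X))"
    unfolding pos_xlogy_def neg_xlogy_def m_def
    by (rule set_nn_integral_le1_cong; rule e2ennreal_xlogy_sum(1)[OF fin Q])
      (use F g in \<open>auto dest: le1_densityD\<close>)
  moreover have "(\<lambda>x. \<Sum>k\<in>K. ennreal (Q k) * neg_xlogy (F k) g {x}) \<in> borel_measurable (state_measure Xs)"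
    and "(\<lambda>x. \<Sum>k\<in>K. ennreal (Q k) * pos_xlogy (F k) g {x}) \<in> borel_measurable (state_measure Xs)"
    using F measurable_neg_xlogy[OF _ g] measurable_pos_xlogy[OF _ g] by auto
  ultimately have balance:
    "?I (pos_xlogy m g) + (\<Sum>k\<in>K. ennreal (Q k) * ?I (neg_xlogy (F k) g))
   = ?I (neg_xlogy m g) + (\<Sum>k\<in>K. ennreal (Q k) * ?I (pos_xlogy (F k) g))"
    using F measurable_pos_xlogy[OF m g] measurable_neg_xlogy[OF m g]
      measurable_neg_xlogy[OF _ g] measurable_pos_xlogy[OF _ g]
    by (simp add: set_nn_integral_le1_add set_nn_integral_le1_sum_cmult)
  have sum_finite: "(\<Sum>k\<in>K. ennreal (Q k) * ?I (pos_xlogy (F k) g)) < top"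
    using finite_pos fin by (simp add: ennreal_mult_less_top less_top)
  have "?I (pos_xlogy m g) < top"
    using set_nn_integral_le1_pos_xlogy_sum_le[OF fin Q F g] sum_finite by (simp add: m_def)
  have "cross_ent Xs m g = - (enn2ereal (?I (pos_xlogy m g)) - enn2ereal (?I (neg_xlogy m g)))"
    by (rule cross_ent_eq_pos_neg[OF Xs m g])
  also have "\<dots> = - (enn2ereal (\<Sum>k\<in>K. ennreal (Q k) * ?I (pos_xlogy (F k) g))
                     - enn2ereal (\<Sum>k\<in>K. ennreal (Q k) * ?I (neg_xlogy (F k) g)))"
    by (rule uminus_enn2ereal_diff_eq[OF balance \<open>?I (pos_xlogy m g) < top\<close> sum_finite])
  also have "\<dots> = (\<Sum>k\<in>K. ereal (Q k) * - (enn2ereal (?I (pos_xlogy (F k) g))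
                                             - enn2ereal (?I (neg_xlogy (F k) g))))"
    by (rule sum_ereal_mult_uminus_enn2ereal_diff[symmetric]) (use fin Q finite_pos in auto)
  also have "\<dots> = (\<Sum>k\<in>K. ereal (Q k) * cross_ent Xs (F k) g)"
    using F by (intro sum.cong refl) (simp add: cross_ent_eq_pos_neg[OF Xs _ g])
  finally show ?thesis by (simp add: m_def)
qed

lemma cross_ent_gibbs:
  assumes Xs: "Xs \<in> sets lborel" and m: "le1_density Xs m" and g: "le1_density Xs g"
    and mass: "set_nn_integral_le1 Xs (\<lambda>X. ennreal (m X)) = set_nn_integral_le1 Xs (\<lambda>X. ennreal (g X))"
      "set_nn_integral_le1 Xs (\<lambda>X. ennreal (g X)) < top"
    and finite_pos: "set_nn_integral_le1 Xs (pos_xlogy m g) < top"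
      "set_nn_integral_le1 Xs (pos_xlogy m m) < top"
  shows "cross_ent Xs m m \<le> cross_ent Xs m g"
proof -
  let ?I = "set_nn_integral_le1 Xs"
  have "?I (\<lambda>X. pos_xlogy m g X + neg_xlogy m m X + ennreal (m X))
      \<le> ?I (\<lambda>X. neg_xlogy m g X + pos_xlogy m m X + ennreal (g X))"
    unfolding pos_xlogy_def neg_xlogy_def
    by (rule set_nn_integral_le1_mono; rule e2ennreal_xlogy_gibbs) (use m g in \<open>auto dest: le1_densityD\<close>)
  then have "?I (pos_xlogy m g) + ?I (neg_xlogy m m) + ?I (\<lambda>X. ennreal (g X))
      \<le> ?I (neg_xlogy m g) + ?I (pos_xlogy m m) + ?I (\<lambda>X. ennreal (g X))"
    using mass(1) measurable_pos_xlogy[OF m g] measurable_neg_xlogy[OF m m] le1_densityD(4)[OF m]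
      measurable_neg_xlogy[OF m g] measurable_pos_xlogy[OF m m] le1_densityD(4)[OF g]
    by (simp add: set_nn_integral_le1_add)
  then have "- (enn2ereal (?I (pos_xlogy m m)) - enn2ereal (?I (neg_xlogy m m)))
        \<le> - (enn2ereal (?I (pos_xlogy m g)) - enn2ereal (?I (neg_xlogy m g)))"
    by (rule uminus_enn2ereal_diff_le[OF _ finite_pos mass(2)])
  then show ?thesis using cross_ent_eq_pos_neg[OF Xs m m] cross_ent_eq_pos_neg[OF Xs m g] by simp
qed


lemma bernoulli_le1_density:
  assumes Xs: "Xs \<in> sets lborel" and b: "is_bernoulli Xs b"
  shows "le1_density Xs b"
proof -
  obtain r p where rp: "0 \<le> r" "r \<le> 1" "p \<in> borel_measurable lborel" "\<forall>x\<in>Xs. 0 \<le> p x"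
        "b {} = 1 - r" "\<forall>x\<in>Xs. b {x} = r * p x"
        "\<forall>X. X \<subseteq> Xs \<and> finite X \<and> 2 \<le> card X \<longrightarrow> b X = 0"
    using b unfolding is_bernoulli_def by blast
  have "(\<lambda>x. r * p x) \<in> borel_measurable (state_measure Xs)"
    unfolding state_measure_def using rp(3) by (intro measurable_restrict_space1) simp
  then have "(\<lambda>x. b {x}) \<in> borel_measurable (state_measure Xs)"
    by (rule measurable_cong[THEN iffD2, rotated]) (use rp(6) in auto)
  then show ?thesis using rp unfolding le1_density_def by auto
qed

lemma set_nn_integral_le1_bernoulli:
  assumes Xs: "Xs \<in> sets lborel" and b: "is_bernoulli Xs b"
  shows "set_nn_integral_le1 Xs (\<lambda>X. ennreal (b X)) = 1"
proof -
  obtain r p where rp: "0 \<le> r" "r \<le> 1" "p \<in> borel_measurable lborel" "\<forall>x\<in>Xs. 0 \<le> p x"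
        "(\<integral>\<^sup>+ x. ennreal (p x) \<partial>state_measure Xs) = 1"
        "b {} = 1 - r" "\<forall>x\<in>Xs. b {x} = r * p x"
    using b unfolding is_bernoulli_def by blast
  have pm: "(\<lambda>x. ennreal (p x)) \<in> borel_measurable (state_measure Xs)"
    unfolding state_measure_def using rp(3) by (intro measurable_restrict_space1) simp
  have "(\<integral>\<^sup>+ x. ennreal (b {x}) \<partial>state_measure Xs)
      = (\<integral>\<^sup>+ x. ennreal r * ennreal (p x) \<partial>state_measure Xs)"
    by (rule nn_integral_cong) (use rp in \<open>auto simp: ennreal_mult\<close>)
  also have "\<dots> = ennreal r" using pm rp(5) by (simp add: nn_integral_cmult)
  finally show ?thesis
    unfolding set_nn_integral_le1_def using rp by (simp add: ennreal_plus[symmetric] del: ennreal_plus)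
qed

lemma is_bernoulliD:
  assumes "is_bernoulli Xs b"
  shows "b {} \<le> 1" "b {} = 1 \<Longrightarrow> x \<in> Xs \<Longrightarrow> b {x} = 0"
  using assms unfolding is_bernoulli_def by auto

lemma le1_density_is_bernoulli:
  assumes Xs: "Xs \<in> sets lborel" and m: "le1_density Xs m"
    and mass: "set_nn_integral_le1 Xs (\<lambda>X. ennreal (m X)) = 1"
    and deg: "m {} = 1 \<Longrightarrow> \<forall>x\<in>Xs. m {x} = 0" and b0: "is_bernoulli Xs b0"
  shows "is_bernoulli Xs m"
proof -
  let ?M = "state_measure Xs"
  define I where "I = (\<integral>\<^sup>+ x. ennreal (m {x}) \<partial>?M)"
  have m0: "0 \<le> m {}" "\<And>x. x \<in> Xs \<Longrightarrow> 0 \<le> m {x}" using m by (auto simp: le1_density_def)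
  have van: "\<forall>X. X \<subseteq> Xs \<and> finite X \<and> 2 \<le> card X \<longrightarrow> m X = 0" using m by (auto simp: le1_density_def)
  have sum1: "ennreal (m {}) + I = 1" using mass by (simp add: set_nn_integral_le1_def I_def)
  then have "I \<noteq> top" by (metis ennreal_add_eq_top ennreal_one_neq_top)
  then obtain i where i: "I = ennreal i" "0 \<le> i" by (cases I) auto
  have "ennreal (m {} + i) = 1" using sum1 i m0 by (simp add: ennreal_plus)
  then have mi: "m {} + i = 1" using m0 i by (simp only: ennreal_eq_1)
  define r where "r = 1 - m {}"
  have r: "0 \<le> r" "r \<le> 1" "i = r" using mi i m0 by (auto simp: r_def)
  define mp where "mp = (\<lambda>x. if x \<in> Xs then m {x} else 0)"
  have mpm: "mp \<in> borel_measurable lborel"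
  proof -
    have "(\<lambda>x. m {x}) \<in> borel_measurable (restrict_space lborel Xs)"
      using m by (simp add: le1_density_def state_measure_def)
    then show ?thesis unfolding mp_def using Xs by (subst (asm) measurable_restrict_space_iff) auto
  qed
  show ?thesis
  proof (cases "r = 0")
    case False
    then have rp: "0 < r" using r by simp
    define p where "p = (\<lambda>x. mp x / r)"
    have pm: "p \<in> borel_measurable lborel" unfolding p_def using mpm by measurable
    have "(\<integral>\<^sup>+ x. ennreal (p x) \<partial>?M) = (\<integral>\<^sup>+ x. ennreal (m {x}) * ennreal (1 / r) \<partial>?M)"
      by (rule nn_integral_cong) (use m0 rp in \<open>auto simp: p_def mp_def ennreal_mult[symmetric]\<close>)
    also have "\<dots> = I * ennreal (1 / r)"
      unfolding I_def by (rule nn_integral_multc) (rule le1_densityD(4)[OF m])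
    also have "\<dots> = 1" using r rp i by (simp add: ennreal_mult[symmetric])
    finally have pint: "(\<integral>\<^sup>+ x. ennreal (p x) \<partial>?M) = 1" .
    show ?thesis unfolding is_bernoulli_def
      by (intro exI[of _ r] exI[of _ p]) (use r pm pint van m0 rp in \<open>auto simp: p_def mp_def r_def\<close>)
  next
    case True
    \<comment> \<open>then any probability density serves as state density; one is borrowed from \<open>b0\<close>\<close>
    obtain r0 p0 where rp0: "p0 \<in> borel_measurable lborel" "\<forall>x\<in>Xs. 0 \<le> p0 x"
        "(\<integral>\<^sup>+ x. ennreal (p0 x) \<partial>?M) = 1"
      using b0 unfolding is_bernoulli_def by blast
    have "m {} = 1" using True by (simp add: r_def)
    then have "\<forall>x\<in>Xs. m {x} = 0" using deg by blast
    then show ?thesis unfolding is_bernoulli_def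
      by (intro exI[of _ 0] exI[of _ p0]) (use rp0 van \<open>m {} = 1\<close> in auto)
  qed
qed

lemma ereal_sum_mult_distrib:
  assumes "\<And>k. k \<in> K \<Longrightarrow> 0 \<le> x k"
  shows "ereal (\<Sum>k\<in>K. x k) * c = (\<Sum>k\<in>K. ereal (x k) * c)"
  using sum_ereal_left_distrib[of K "\<lambda>k. ereal (x k)" c] assms by simp

lemma ereal_mult_sum_distrib:
  assumes "0 \<le> x"
  shows "ereal x * (\<Sum>k\<in>K. c k) = (\<Sum>k\<in>K. ereal x * c k)"
  using sum_distrib_right_ereal[OF assms, of c K] by (simp add: mult.commute)

lemma finite_perms: "finite (perms N)"
  unfolding perms_def by (rule finite_permutations) simp

lemma perms_less: "\<pi> \<in> perms N \<Longrightarrow> i < N \<Longrightarrow> \<pi> i < N"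
  unfolding perms_def using permutes_in_image[of \<pi> "{..<N}" i] by auto

lemma sum_perms_regroup_at:
  fixes c :: "'h \<Rightarrow> nat \<Rightarrow> ereal"
  assumes A: "finite A" "\<forall>a\<in>A. length a = N" and w: "\<forall>a\<in>A. 0 \<le> w a"
    and q: "valid_q N A q" and i: "i < N"
  shows "(\<Sum>a\<in>A. \<Sum>\<pi>\<in>perms N. ereal (w a * q a \<pi>) * c (a!i) (\<pi> i))
    = (\<Sum>h\<in>(\<Union>a\<in>A. set a). \<Sum>j<N. ereal (\<Sum>a\<in>{a\<in>A. a ! i = h}. w a * (\<Sum>\<pi>\<in>{\<pi>\<in>perms N. \<pi> i = j}. q a \<pi>)) * c h j)"
proof -
  let ?U = "\<Union>a\<in>A. set a"
  have qn: "\<And>a \<pi>. a \<in> A \<Longrightarrow> \<pi> \<in> perms N \<Longrightarrow> 0 \<le> q a \<pi>" using q by (auto simp: valid_q_def)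
  have inner: "(\<Sum>\<pi>\<in>perms N. ereal (w a * q a \<pi>) * c (a!i) (\<pi> i))
      = (\<Sum>j<N. ereal (w a * (\<Sum>\<pi>\<in>{\<pi>\<in>perms N. \<pi> i = j}. q a \<pi>)) * c (a!i) j)" if a: "a \<in> A" for a
  proof -
    have "(\<Sum>\<pi>\<in>perms N. ereal (w a * q a \<pi>) * c (a!i) (\<pi> i))
        = (\<Sum>j<N. \<Sum>\<pi>\<in>{\<pi>\<in>perms N. \<pi> i = j}. ereal (w a * q a \<pi>) * c (a!i) (\<pi> i))"
      by (rule sum.group[symmetric]) (use finite_perms perms_less i in auto)
    also have "\<dots> = (\<Sum>j<N. \<Sum>\<pi>\<in>{\<pi>\<in>perms N. \<pi> i = j}. ereal (w a * q a \<pi>) * c (a!i) j)"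
      by (intro sum.cong refl) auto
    also have "\<dots> = (\<Sum>j<N. ereal (w a * (\<Sum>\<pi>\<in>{\<pi>\<in>perms N. \<pi> i = j}. q a \<pi>)) * c (a!i) j)"
      by (intro sum.cong refl, subst ereal_sum_mult_distrib[symmetric])
        (use w a qn in \<open>auto simp: sum_distrib_left\<close>)
    finally show ?thesis .
  qed
  have "(\<Sum>a\<in>A. \<Sum>\<pi>\<in>perms N. ereal (w a * q a \<pi>) * c (a!i) (\<pi> i))
      = (\<Sum>a\<in>A. \<Sum>j<N. ereal (w a * (\<Sum>\<pi>\<in>{\<pi>\<in>perms N. \<pi> i = j}. q a \<pi>)) * c (a!i) j)"
    using inner by (rule sum.cong[OF refl])
  also have "\<dots> = (\<Sum>h\<in>?U. \<Sum>a\<in>{a\<in>A. a ! i = h}. \<Sum>j<N. ereal (w a * (\<Sum>\<pi>\<in>{\<pi>\<in>perms N. \<pi> i = j}. q a \<pi>)) * c (a!i) j)"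
    by (rule sum.group[symmetric]) (use A i in \<open>auto intro!: finite_UN_I\<close>)
  also have "\<dots> = (\<Sum>h\<in>?U. \<Sum>a\<in>{a\<in>A. a ! i = h}. \<Sum>j<N. ereal (w a * (\<Sum>\<pi>\<in>{\<pi>\<in>perms N. \<pi> i = j}. q a \<pi>)) * c h j)"
    by (intro sum.cong refl) auto
  also have "\<dots> = (\<Sum>h\<in>?U. \<Sum>j<N. \<Sum>a\<in>{a\<in>A. a ! i = h}. ereal (w a * (\<Sum>\<pi>\<in>{\<pi>\<in>perms N. \<pi> i = j}. q a \<pi>)) * c h j)"
    by (intro sum.cong refl sum.swap)
  also have "\<dots> = (\<Sum>h\<in>?U. \<Sum>j<N. ereal (\<Sum>a\<in>{a\<in>A. a ! i = h}. w a * (\<Sum>\<pi>\<in>{\<pi>\<in>perms N. \<pi> i = j}. q a \<pi>)) * c h j)"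
    by (intro sum.cong refl ereal_sum_mult_distrib[symmetric] mult_nonneg_nonneg sum_nonneg) (use w qn in auto)
  finally show ?thesis .
qed

lemma sum_assignments_regroup:
  fixes c :: "'h \<Rightarrow> nat \<Rightarrow> ereal"
  assumes A: "finite A" "\<forall>a\<in>A. length a = N" and w: "\<forall>a\<in>A. 0 \<le> w a"
    and q: "valid_q N A q"
  shows "(\<Sum>a\<in>A. \<Sum>\<pi>\<in>perms N. ereal (w a * q a \<pi>) * (\<Sum>i<N. c (a!i) (\<pi> i)))
    = (\<Sum>j<N. \<Sum>h\<in>(\<Union>a\<in>A. set a). ereal (induced_q N A w q h j) * c h j)"
proof -
  let ?U = "\<Union>a\<in>A. set a"
  let ?X = "\<lambda>i h j. (\<Sum>a\<in>{a\<in>A. a ! i = h}. w a * (\<Sum>\<pi>\<in>{\<pi>\<in>perms N. \<pi> i = j}. q a \<pi>))"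
  have qn: "\<And>a \<pi>. a \<in> A \<Longrightarrow> \<pi> \<in> perms N \<Longrightarrow> 0 \<le> q a \<pi>" using q by (auto simp: valid_q_def)
  have Xn: "0 \<le> ?X i h j" for i h j using w qn by (auto intro!: sum_nonneg mult_nonneg_nonneg)
  have "(\<Sum>a\<in>A. \<Sum>\<pi>\<in>perms N. ereal (w a * q a \<pi>) * (\<Sum>i<N. c (a!i) (\<pi> i)))
      = (\<Sum>a\<in>A. \<Sum>\<pi>\<in>perms N. \<Sum>i<N. ereal (w a * q a \<pi>) * c (a!i) (\<pi> i))"
    by (intro sum.cong refl ereal_mult_sum_distrib mult_nonneg_nonneg) (use w qn in auto)
  also have "\<dots> = (\<Sum>a\<in>A. \<Sum>i<N. \<Sum>\<pi>\<in>perms N. ereal (w a * q a \<pi>) * c (a!i) (\<pi> i))"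
    by (intro sum.cong refl sum.swap)
  also have "\<dots> = (\<Sum>i<N. \<Sum>a\<in>A. \<Sum>\<pi>\<in>perms N. ereal (w a * q a \<pi>) * c (a!i) (\<pi> i))"
    by (rule sum.swap)
  also have "\<dots> = (\<Sum>i<N. \<Sum>h\<in>?U. \<Sum>j<N. ereal (?X i h j) * c h j)"
    by (intro sum.cong refl sum_perms_regroup_at[OF A w q]) auto
  also have "\<dots> = (\<Sum>i<N. \<Sum>j<N. \<Sum>h\<in>?U. ereal (?X i h j) * c h j)"
    by (intro sum.cong refl sum.swap)
  also have "\<dots> = (\<Sum>j<N. \<Sum>i<N. \<Sum>h\<in>?U. ereal (?X i h j) * c h j)"
    by (rule sum.swap)
  also have "\<dots> = (\<Sum>j<N. \<Sum>h\<in>?U. \<Sum>i<N. ereal (?X i h j) * c h j)"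
    by (intro sum.cong refl sum.swap)
  also have "\<dots> = (\<Sum>j<N. \<Sum>h\<in>?U. ereal (\<Sum>i<N. ?X i h j) * c h j)"
    by (intro sum.cong refl ereal_sum_mult_distrib[symmetric] Xn)
  also have "\<dots> = (\<Sum>j<N. \<Sum>h\<in>?U. ereal (induced_q N A w q h j) * c h j)"
    by (simp add: induced_q_def)
  finally show ?thesis .
qed

lemma sum_if_perm_eq:
  assumes p: "\<pi> \<in> perms N" and j: "j < N"
  shows "(\<Sum>i<N. if \<pi> i = j then x else 0) = (x::real)"
proof -
  have pp: "\<pi> permutes {..<N}" using p by (simp add: perms_def)
  have e: "\<And>i. (\<pi> i = j) = (inv \<pi> j = i)" using permutes_inv_eq[OF pp] by metis
  have "inv \<pi> j \<in> {..<N}" using permutes_in_image[OF permutes_inv[OF pp], of j] j by simp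
  then show ?thesis by (simp add: e)
qed

lemma sum_induced_q_column:
  assumes A: "finite A" "\<forall>a\<in>A. length a = N" and wsum: "(\<Sum>a\<in>A. w a) = 1"
    and q: "valid_q N A q" and j: "j < N"
  shows "(\<Sum>h\<in>(\<Union>a\<in>A. set a). induced_q N A w q h j) = 1"
proof -
  let ?U = "\<Union>a\<in>A. set a"
  let ?S = "\<lambda>a i. (\<Sum>\<pi>\<in>{\<pi>\<in>perms N. \<pi> i = j}. q a \<pi>)"
  have "(\<Sum>h\<in>?U. induced_q N A w q h j) = (\<Sum>i<N. \<Sum>h\<in>?U. \<Sum>a\<in>{a\<in>A. a ! i = h}. w a * ?S a i)"
    unfolding induced_q_def by (rule sum.swap)
  also have "\<dots> = (\<Sum>i<N. \<Sum>a\<in>A. w a * ?S a i)"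
    by (intro sum.cong refl sum.group) (use A in \<open>auto intro!: finite_UN_I\<close>)
  also have "\<dots> = (\<Sum>a\<in>A. w a * (\<Sum>i<N. ?S a i))"
    by (subst sum.swap) (simp add: sum_distrib_left)
  also have "\<dots> = (\<Sum>a\<in>A. w a)"
  proof (intro sum.cong refl)
    fix a assume a: "a \<in> A"
    have "(\<Sum>i<N. ?S a i) = (\<Sum>i<N. \<Sum>\<pi>\<in>perms N. if \<pi> i = j then q a \<pi> else 0)"
      by (rule sum.cong[OF refl], rule sum.inter_filter[OF finite_perms])
    also have "\<dots> = (\<Sum>\<pi>\<in>perms N. \<Sum>i<N. if \<pi> i = j then q a \<pi> else 0)"
      by (rule sum.swap)
    also have "\<dots> = (\<Sum>\<pi>\<in>perms N. q a \<pi>)"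
      by (intro sum.cong refl sum_if_perm_eq j)
    also have "\<dots> = 1" using q a by (simp add: valid_q_def)
    finally show "w a * (\<Sum>i<N. ?S a i) = w a" by simp
  qed
  finally show ?thesis using wsum by simp
qed

lemma induced_q_nonneg:
  assumes w: "\<forall>a\<in>A. 0 \<le> w a" and q: "valid_q N A q"
  shows "0 \<le> induced_q N A w q h j"
  unfolding induced_q_def using w q
  by (auto simp: valid_q_def intro!: sum_nonneg mult_nonneg_nonneg)

lemma induced_q_in_P_set: "valid_q N A q \<Longrightarrow> induced_q N A w q \<in> P_set N A w"
  by (auto simp: P_set_def)

locale multi_bernoulli_mixture =
  fixes Xs :: "'a::euclidean_space set"
    and N :: nat
    and H :: "'h set"
    and f :: "'h \<Rightarrow> 'a set \<Rightarrow> real"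
    and A :: "'h list set"
    and w :: "'h list \<Rightarrow> real"
  assumes Xs_meas: "Xs \<in> sets lborel"
    and f_bern: "\<forall>h\<in>H. is_bernoulli Xs (f h)"
    and f_entropy_finite: "\<forall>h\<in>H. \<bar>cross_ent Xs (f h) (f h)\<bar> \<noteq> \<infinity>"
    and A_fin: "finite A"
    and A_sub: "\<forall>a\<in>A. length a = N \<and> set a \<subseteq> H"
    and w_nonneg: "\<forall>a\<in>A. 0 \<le> w a"
    and w_sum: "(\<Sum>a\<in>A. w a) = 1"
begin

abbreviation hyps :: "'h set" where
  "hyps \<equiv> \<Union>a\<in>A. set a"

definition mixture :: "('h \<Rightarrow> nat \<Rightarrow> real) \<Rightarrow> nat \<Rightarrow> 'a set \<Rightarrow> real" where
  "mixture Q j X = (\<Sum>h\<in>hyps. Q h j * f h X)"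

lemma P_setD:
  assumes "Q \<in> P_set N A w"
  shows "0 \<le> Q h j" and "j < N \<Longrightarrow> (\<Sum>h\<in>hyps. Q h j) = 1"
proof -
  obtain q where "valid_q N A q" "Q = induced_q N A w q" using assms by (auto simp: P_set_def)
  then show "0 \<le> Q h j" and "j < N \<Longrightarrow> (\<Sum>h\<in>hyps. Q h j) = 1"
    using induced_q_nonneg[OF w_nonneg] sum_induced_q_column[OF A_fin _ w_sum] A_sub by auto
qed

lemma finite_hyps: "finite hyps"
  using A_fin by auto

lemma hyps_subset: "hyps \<subseteq> H"
  using A_sub by auto

lemma le1_density_f: "h \<in> H \<Longrightarrow> le1_density Xs (f h)"
  using f_bern bernoulli_le1_density[OF Xs_meas] by blast

lemma set_nn_integral_le1_pos_xlogy_f_finite: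
  assumes h: "h \<in> H" and g: "is_bernoulli Xs g"
  shows "set_nn_integral_le1 Xs (pos_xlogy (f h) g) < top"
proof (rule set_nn_integral_le1_pos_xlogy_finite[OF le1_density_f[OF h] bernoulli_le1_density[OF Xs_meas g]])
  show "set_nn_integral_le1 Xs (pos_xlogy (f h) (f h)) < top"
  proof (rule ccontr)
    assume "\<not> ?thesis"
    then have "set_nn_integral_le1 Xs (pos_xlogy (f h) (f h)) = top" using top.not_eq_extremum by blast
    then have "cross_ent Xs (f h) (f h) = - \<infinity>"
      using cross_ent_eq_pos_neg[OF Xs_meas le1_density_f[OF h] le1_density_f[OF h]] by simp
    with f_entropy_finite h show False by auto
  qed
  show "set_nn_integral_le1 Xs (\<lambda>X. ennreal (g X)) < top"
    by (simp add: set_nn_integral_le1_bernoulli[OF Xs_meas g])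
qed

lemma le1_density_mixture:
  "Q \<in> P_set N A w \<Longrightarrow> le1_density Xs (mixture Q j)"
  unfolding mixture_def using finite_hyps hyps_subset le1_density_f
  by (intro le1_density_sum_mult) (auto dest: P_setD(1))

lemma set_nn_integral_le1_mixture:
  assumes Q: "Q \<in> P_set N A w" and j: "j < N"
  shows "set_nn_integral_le1 Xs (\<lambda>X. ennreal (mixture Q j X)) = 1"
proof -
  have Q0: "\<forall>h\<in>hyps. 0 \<le> Q h j" using P_setD(1)[OF Q] by auto
  have "set_nn_integral_le1 Xs (\<lambda>X. ennreal (mixture Q j X))
      = (\<Sum>h\<in>hyps. ennreal (Q h j) * set_nn_integral_le1 Xs (\<lambda>X. ennreal (f h X)))"
    unfolding mixture_def using finite_hyps Q0 hyps_subset le1_density_f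
    by (intro set_nn_integral_le1_ennreal_sum_mult) auto
  also have "\<dots> = (\<Sum>h\<in>hyps. ennreal (Q h j))"
    using hyps_subset f_bern by (intro sum.cong refl) (auto simp: set_nn_integral_le1_bernoulli[OF Xs_meas])
  also have "\<dots> = ennreal (\<Sum>h\<in>hyps. Q h j)" using Q0 by (subst sum_ennreal) auto
  also have "\<dots> = 1" using P_setD(2)[OF Q] j by simp
  finally show ?thesis .
qed

lemma mixture_is_bernoulli:
  assumes Q: "Q \<in> P_set N A w" and j: "j < N"
  shows "is_bernoulli Xs (mixture Q j)"
proof -
  obtain a where "a \<in> A" using w_sum by fastforce
  then have b0: "is_bernoulli Xs (f (a ! j))" using A_sub j f_bern by (metis nth_mem subsetD)
  have Q0: "\<forall>h\<in>hyps. 0 \<le> Q h j" using P_setD(1)[OF Q] by auto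
  have deg: "\<forall>x\<in>Xs. mixture Q j {x} = 0" if empty: "mixture Q j {} = 1"
  proof
    fix x assume x: "x \<in> Xs"
    \<comment> \<open>the weights sum to 1 and each \<open>f h {} \<le> 1\<close>, so \<open>f h {} = 1\<close> wherever \<open>Q h j > 0\<close>\<close>
    have le1: "\<forall>h\<in>hyps. f h {} \<le> 1" using hyps_subset f_bern is_bernoulliD(1) by blast
    have "(\<Sum>h\<in>hyps. Q h j * (1 - f h {})) = (\<Sum>h\<in>hyps. Q h j) - mixture Q j {}"
      by (simp add: mixture_def algebra_simps sum_subtractf)
    also have "\<dots> = 0" using P_setD(2)[OF Q] j empty by simp
    finally have "\<forall>h\<in>hyps. Q h j * (1 - f h {}) = 0"
      using sum_nonneg_eq_0_iff[OF finite_hyps, of "\<lambda>h. Q h j * (1 - f h {})"] Q0 le1 by auto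
    then have "\<forall>h\<in>hyps. Q h j * f h {x} = 0"
      using hyps_subset f_bern is_bernoulliD(2)[of Xs _ x] x by (metis mult_eq_0_iff right_minus_eq subsetD)
    then show "mixture Q j {x} = 0" unfolding mixture_def by (intro sum.neutral) auto
  qed
  show ?thesis
    by (rule le1_density_is_bernoulli[OF Xs_meas le1_density_mixture[OF Q]
          set_nn_integral_le1_mixture[OF Q j] deg b0])
qed

lemma J0_eq_sum_cross_ent_mixture:
  assumes q: "valid_q N A q" and g: "\<forall>j<N. is_bernoulli Xs (g j)"
  shows "J0 Xs N A w f g q = (\<Sum>j<N. cross_ent Xs (mixture (induced_q N A w q) j) (g j))"
proof -
  let ?Q = "induced_q N A w q"
  have "J0 Xs N A w f g q = (\<Sum>j<N. \<Sum>h\<in>hyps. ereal (?Q h j) * cross_ent Xs (f h) (g j))"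
    unfolding J0_def using A_fin A_sub w_nonneg q by (intro sum_assignments_regroup) auto
  also have "\<dots> = (\<Sum>j<N. cross_ent Xs (mixture ?Q j) (g j))"
    unfolding mixture_def
    using finite_hyps hyps_subset le1_density_f bernoulli_le1_density[OF Xs_meas] g
      set_nn_integral_le1_pos_xlogy_f_finite induced_q_nonneg[OF w_nonneg q]
    by (intro sum.cong refl cross_ent_sum_left[OF Xs_meas, symmetric]) auto
  finally show ?thesis .
qed

lemma mix_obj_eq_sum_cross_ent_mixture:
  "mix_obj Xs N A f Q = (\<Sum>j<N. cross_ent Xs (mixture Q j) (mixture Q j))"
  unfolding mix_obj_def mixture_def Let_def ..

lemma mix_obj_le_J0:
  assumes q: "valid_q N A q" and g: "\<forall>j<N. is_bernoulli Xs (g j)"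
  shows "mix_obj Xs N A f (induced_q N A w q) \<le> J0 Xs N A w f g q"
proof -
  let ?Q = "induced_q N A w q"
  note Q = induced_q_in_P_set[OF q]
  have "cross_ent Xs (mixture ?Q j) (mixture ?Q j) \<le> cross_ent Xs (mixture ?Q j) (g j)"
    if j: "j < N" for j
  proof (rule cross_ent_gibbs[OF Xs_meas le1_density_mixture[OF Q]])
    have "set_nn_integral_le1 Xs (pos_xlogy (mixture ?Q j) g') < top" if "is_bernoulli Xs g'" for g'
    proof -
      have "set_nn_integral_le1 Xs (pos_xlogy (mixture ?Q j) g')
          \<le> (\<Sum>h\<in>hyps. ennreal (?Q h j) * set_nn_integral_le1 Xs (pos_xlogy (f h) g'))"
        unfolding mixture_def
        using finite_hyps hyps_subset le1_density_f bernoulli_le1_density[OF Xs_meas that]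
          induced_q_nonneg[OF w_nonneg q]
        by (intro set_nn_integral_le1_pos_xlogy_sum_le) auto
      also have "\<dots> < top"
        using finite_hyps hyps_subset set_nn_integral_le1_pos_xlogy_f_finite[OF _ that]
        by (auto simp: ennreal_mult_less_top less_top)
      finally show ?thesis .
    qed
    then show "set_nn_integral_le1 Xs (pos_xlogy (mixture ?Q j) (g j)) < top"
      and "set_nn_integral_le1 Xs (pos_xlogy (mixture ?Q j) (mixture ?Q j)) < top"
      using g j mixture_is_bernoulli[OF Q j] by auto
    show "le1_density Xs (g j)" using g j bernoulli_le1_density[OF Xs_meas] by blast
    show "set_nn_integral_le1 Xs (\<lambda>X. ennreal (mixture ?Q j X)) = set_nn_integral_le1 Xs (\<lambda>X. ennreal (g j X))"
      and "set_nn_integral_le1 Xs (\<lambda>X. ennreal (g j X)) < top"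
      using set_nn_integral_le1_mixture[OF Q j] set_nn_integral_le1_bernoulli[OF Xs_meas] g j by auto
  qed
  then show ?thesis
    unfolding mix_obj_eq_sum_cross_ent_mixture J0_eq_sum_cross_ent_mixture[OF q g] by (intro sum_mono) simp
qed

lemma J0_mixture_eq_mix_obj:
  assumes q: "valid_q N A q"
  shows "J0 Xs N A w f (mixture (induced_q N A w q)) q = mix_obj Xs N A f (induced_q N A w q)"
  using q mixture_is_bernoulli[OF induced_q_in_P_set[OF q]]
  by (simp add: J0_eq_sum_cross_ent_mixture mix_obj_eq_sum_cross_ent_mixture)

end

theorem theorem6:
  fixes Xs :: "'a::euclidean_space set"
    and N :: nat
    and H :: "'h set"
    and f :: "'h \<Rightarrow> 'a set \<Rightarrow> real"
    and A :: "'h list set"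
    and w :: "'h list \<Rightarrow> real"
  assumes Xs_meas: "Xs \<in> sets lborel"
    and f_bern: "\<forall>h\<in>H. is_bernoulli Xs (f h)"
    and f_entropy_finite: "\<forall>h\<in>H. \<bar>cross_ent Xs (f h) (f h)\<bar> \<noteq> \<infinity>"
    and A_fin: "finite A"
    and A_sub: "\<forall>a\<in>A. length a = N \<and> set a \<subseteq> H"
    and w_nonneg: "\<forall>a\<in>A. 0 \<le> w a"
    and w_sum: "(\<Sum>a\<in>A. w a) = 1"
  shows "(\<forall>q. valid_q N A q \<longrightarrow>
            (INF g\<in>{g. \<forall>j<N. is_bernoulli Xs (g j)}. J0 Xs N A w f g q)
              = mix_obj Xs N A f (induced_q N A w q)
          \<and> (\<exists>g. (\<forall>j<N. is_bernoulli Xs (g j))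
                 \<and> J0 Xs N A w f g q = mix_obj Xs N A f (induced_q N A w q)))
       \<and> (INF gq\<in>{(g, q). (\<forall>j<N. is_bernoulli Xs (g j)) \<and> valid_q N A q}.
             J0 Xs N A w f (fst gq) (snd gq))
         = (INF Q\<in>P_set N A w. mix_obj Xs N A f Q)"
proof -
  interpret multi_bernoulli_mixture Xs N H f A w
    using assms by unfold_locales
  let ?G = "{g. \<forall>j<N. is_bernoulli Xs (g j)}" and ?V = "{q. valid_q N A q}"
  have optimal: "mixture (induced_q N A w q) \<in> ?G"
    and inf_G: "(INF g\<in>?G. J0 Xs N A w f g q) = mix_obj Xs N A f (induced_q N A w q)"
    if q: "valid_q N A q" for q
  proof -
    show opt: "mixture (induced_q N A w q) \<in> ?G"
      using mixture_is_bernoulli[OF induced_q_in_P_set[OF q]] by simp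
    show "(INF g\<in>?G. J0 Xs N A w f g q) = mix_obj Xs N A f (induced_q N A w q)"
      by (intro antisym INF_lower2[OF opt] INF_greatest)
        (use J0_mixture_eq_mix_obj[OF q] mix_obj_le_J0[OF q] in auto)
  qed
  have pairs: "{(g, q). (\<forall>j<N. is_bernoulli Xs (g j)) \<and> valid_q N A q} = ?G \<times> ?V"
    by auto
  have "(INF gq\<in>?G \<times> ?V. J0 Xs N A w f (fst gq) (snd gq)) = (INF q\<in>?V. INF g\<in>?G. J0 Xs N A w f g q)"
    by (subst INF_commute) (simp add: INF_pair)
  also have "\<dots> = (INF q\<in>?V. mix_obj Xs N A f (induced_q N A w q))"
    using inf_G by (intro INF_cong) auto
  also have "\<dots> = (INF Q\<in>P_set N A w. mix_obj Xs N A f Q)"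
    by (simp add: P_set_def setcompr_eq_image image_comp)
  finally show ?thesis
    using inf_G optimal J0_mixture_eq_mix_obj by (auto simp: pairs) blast
qed

end
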